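(* Let $m,n,p,q,r,s$ be arbitrary integers. Let $$A(x_1,x_2,x_3,x_4)=\begin{bmatrix}x_1 & x_2 & x_3 & x_4\\ -nx_2 & x_1+mx_2 & -nx_4 & x_3+mx_4\\ -qx_3 & -qx_4 & x_1+px_3 & x_2+px_4\\ qnx_4 & -q(x_3+mx_4) & -nx_2-pnx_4 & x_1+mx_2+p(x_3+mx_4)\end{bmatrix}$$ and $$P(x_1,\dots,x_8)=\begin{bmatrix}A(x_1,\dots,x_4) & A(x_5,\dots,x_8)\\ -sA(x_5,\dots,x_8) & A(x_1,\dots,x_4)+rA(x_5,\dots,x_8)\end{bmatrix}.$$ Then for independent variables $x_i,y_i$, $P(x_1,\dots,x_8)P(y_1,\dots,y_8)=P(z_1,\dots,z_8)$, where $z_1,\dots,z_8$ are bilinear forms in the $x_i,y_i$ whose coefficients are integer polynomials in $m,n,p,q,r,s$; in particular $z_1=x_1y_1-nx_2y_2-qx_3y_3+qnx_4y_4-sx_5y_5+snx_6y_6+sqx_7y_7-sqnx_8y_8$. Consequently the octonary octic form $f=\det P$ satisfies $f(x_1,\dots,x_8)f(y_1,\dots,y_8)=f(z_1,\dots,z_8)$. *)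

theory Defs
  imports "Jordan_Normal_Form.Determinant"
begin

text \<open>Integer polynomial expressions in the six parameters m,n,p,q,r,s
  (variable indices 0..5 stand for m,n,p,q,r,s respectively).\<close>
datatype ipoly = PConst int | PVar nat | PAdd ipoly ipoly | PMul ipoly ipoly

fun ieval :: "int \<Rightarrow> int \<Rightarrow> int \<Rightarrow> int \<Rightarrow> int \<Rightarrow> int \<Rightarrow> ipoly \<Rightarrow> int" where
  "ieval m n p q r s (PConst c) = c"
| "ieval m n p q r s (PVar v) =
     (if v = 0 then m else if v = 1 then n else if v = 2 then p
      else if v = 3 then q else if v = 4 then r else s)"
| "ieval m n p q r s (PAdd a b) = ieval m n p q r s a + ieval m n p q r s b"
| "ieval m n p q r s (PMul a b) = ieval m n p q r s a * ieval m n p q r s b"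

definition Amat :: "int \<Rightarrow> int \<Rightarrow> int \<Rightarrow> int \<Rightarrow> int \<Rightarrow> int \<Rightarrow> int \<Rightarrow> int \<Rightarrow> int mat" where
  "Amat m n p q x1 x2 x3 x4 = mat_of_rows_list 4
     [[x1, x2, x3, x4],
      [- n * x2, x1 + m * x2, - n * x4, x3 + m * x4],
      [- q * x3, - q * x4, x1 + p * x3, x2 + p * x4],
      [q * n * x4, - q * (x3 + m * x4), - n * x2 - p * n * x4,
       x1 + m * x2 + p * (x3 + m * x4)]]"

definition Pmat :: "int \<Rightarrow> int \<Rightarrow> int \<Rightarrow> int \<Rightarrow> int \<Rightarrow> int \<Rightarrow> (nat \<Rightarrow> int) \<Rightarrow> int mat" where
  "Pmat m n p q r s x =
     (let A = Amat m n p q (x 1) (x 2) (x 3) (x 4);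
          B = Amat m n p q (x 5) (x 6) (x 7) (x 8)
      in four_block_mat A B ((- s) \<cdot>\<^sub>m B) (A + r \<cdot>\<^sub>m B))"

definition bilin :: "(nat \<Rightarrow> nat \<Rightarrow> nat \<Rightarrow> ipoly) \<Rightarrow> int \<Rightarrow> int \<Rightarrow> int \<Rightarrow> int \<Rightarrow> int \<Rightarrow> int
    \<Rightarrow> (nat \<Rightarrow> int) \<Rightarrow> (nat \<Rightarrow> int) \<Rightarrow> nat \<Rightarrow> int" where
  "bilin C m n p q r s x y k =
     (\<Sum>i\<in>{1..8}. \<Sum>j\<in>{1..8}. ieval m n p q r s (C k i j) * x i * y j)"

end

theory Submission
  imports Defs
begin

text \<open>\<open>A(x)\<close> is the matrix of multiplication by \<open>x\<^sub>1 + x\<^sub>2 a + x\<^sub>3 b + x\<^sub>4 ab\<close> in the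
  ring \<open>\<int>[a, b]\<close> with \<open>a\<^sup>2 = m a - n\<close>, \<open>b\<^sup>2 = p b - q\<close>, and \<open>P(x)\<close> is the matrix of
  multiplication in the rank-8 ring obtained by adjoining a further \<open>c\<close> with \<open>c\<^sup>2 = r c - s\<close>.
  Each step is the same \<open>2 \<times> 2\<close> block construction, which is multiplicative whenever its
  blocks are, so \<open>P(x) P(y) = P(x y)\<close>; the coordinates of the product \<open>x y\<close> are bilinear with
  the structure constants of the ring as coefficients.  The composition law for \<open>det P\<close>
  then follows from multiplicativity of the determinant.\<close>

definition quad_ext_mat :: "'a::comm_ring_1 \<Rightarrow> 'a \<Rightarrow> 'a mat \<Rightarrow> 'a mat \<Rightarrow> 'a mat" where
  "quad_ext_mat r s U V = four_block_mat U V ((- s) \<cdot>\<^sub>m V) (U + r \<cdot>\<^sub>m V)"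

lemma quad_ext_mat_carrier [simp]:
  "U \<in> carrier_mat n n \<Longrightarrow> V \<in> carrier_mat n n \<Longrightarrow> quad_ext_mat r s U V \<in> carrier_mat (2 * n) (2 * n)"
  by (simp add: quad_ext_mat_def mult_2)

lemma quad_ext_mat_mult:
  assumes U: "U \<in> carrier_mat n n" and V: "V \<in> carrier_mat n n"
    and U': "U' \<in> carrier_mat n n" and V': "V' \<in> carrier_mat n n"
  shows "quad_ext_mat r s U V * quad_ext_mat r s U' V'
    = quad_ext_mat r s (U * U' + (- s) \<cdot>\<^sub>m (V * V')) (U * V' + V * U' + r \<cdot>\<^sub>m (V * V'))"
proof -
  have blocks: "(- s) \<cdot>\<^sub>m V \<in> carrier_mat n n" "U + r \<cdot>\<^sub>m V \<in> carrier_mat n n"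
    "(- s) \<cdot>\<^sub>m V' \<in> carrier_mat n n" "U' + r \<cdot>\<^sub>m V' \<in> carrier_mat n n"
    using U V U' V' by auto
  show ?thesis
    unfolding quad_ext_mat_def mult_four_block_mat[OF U V blocks(1,2) U' V' blocks(3,4)]
    by (intro cong_four_block_mat; rule eq_matI)
      (use U V U' V' in \<open>auto simp: scalar_prod_def sum.distrib sum_subtractf sum_negf
        sum_distrib_left algebra_simps\<close>)
qed

lemma quad_ext_mat_add:
  assumes "U \<in> carrier_mat n n" "V \<in> carrier_mat n n" "U' \<in> carrier_mat n n" "V' \<in> carrier_mat n n"
  shows "quad_ext_mat r s U V + quad_ext_mat r s U' V' = quad_ext_mat r s (U + U') (V + V')"
  by (rule eq_matI) (use assms in \<open>auto simp: quad_ext_mat_def algebra_simps\<close>)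

lemma quad_ext_mat_smult:
  assumes "U \<in> carrier_mat n n" "V \<in> carrier_mat n n"
  shows "c \<cdot>\<^sub>m quad_ext_mat r s U V = quad_ext_mat r s (c \<cdot>\<^sub>m U) (c \<cdot>\<^sub>m V)"
  by (rule eq_matI) (use assms in \<open>auto simp: quad_ext_mat_def algebra_simps\<close>)

text \<open>For \<open>ps = [(r\<^sub>k, s\<^sub>k), \<dots>, (r\<^sub>1, s\<^sub>1)]\<close>, coordinate \<open>i\<close> of \<open>x\<close> belongs to the monomial
  \<open>t\<^sub>1\<^bsup>e\<^sub>1\<^esup> \<cdots> t\<^sub>k\<^bsup>e\<^sub>k\<^esup>\<close> whose exponents are the binary digits of \<open>i\<close>, in the ring
  obtained by successively adjoining \<open>t\<^sub>j\<close> with \<open>t\<^sub>j\<^sup>2 = r\<^sub>j t\<^sub>j - s\<^sub>j\<close>.\<close>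

fun tower_mat :: "('a::comm_ring_1 \<times> 'a) list \<Rightarrow> (nat \<Rightarrow> 'a) \<Rightarrow> 'a mat" where
  "tower_mat [] x = mat 1 1 (\<lambda>_. x 0)"
| "tower_mat ((r, s) # ps) x =
     quad_ext_mat r s (tower_mat ps x) (tower_mat ps (\<lambda>i. x (i + 2 ^ length ps)))"

fun tower_mult :: "('a::comm_ring_1 \<times> 'a) list \<Rightarrow> (nat \<Rightarrow> 'a) \<Rightarrow> (nat \<Rightarrow> 'a) \<Rightarrow> nat \<Rightarrow> 'a" where
  "tower_mult [] x y = (\<lambda>_. x 0 * y 0)"
| "tower_mult ((r, s) # ps) x y =
     (let h = 2 ^ length ps; x' = (\<lambda>i. x (i + h)); y' = (\<lambda>i. y (i + h)) in
      (\<lambda>k. if k < h then tower_mult ps x y k + (- s) * tower_mult ps x' y' k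
           else tower_mult ps x y' (k - h) + tower_mult ps x' y (k - h)
                + r * tower_mult ps x' y' (k - h)))"

lemma tower_mat_carrier [simp]: "tower_mat ps x \<in> carrier_mat (2 ^ length ps) (2 ^ length ps)"
  by (induction ps arbitrary: x) auto

lemma tower_mat_cong:
  "(\<And>i. i < 2 ^ length ps \<Longrightarrow> x i = y i) \<Longrightarrow> tower_mat ps x = tower_mat ps y"
proof (induction ps arbitrary: x y)
  case Nil
  then show ?case by simp
next
  case (Cons rs ps)
  have "tower_mat ps x = tower_mat ps y"
    by (rule Cons.IH) (simp add: Cons.prems)
  moreover have "tower_mat ps (\<lambda>i. x (i + 2 ^ length ps)) = tower_mat ps (\<lambda>i. y (i + 2 ^ length ps))"
    by (rule Cons.IH) (simp add: Cons.prems)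
  ultimately show ?case by (cases rs) simp
qed

lemma tower_mat_add: "tower_mat ps (\<lambda>i. x i + y i) = tower_mat ps x + tower_mat ps y"
proof (induction ps arbitrary: x y)
  case Nil
  then show ?case by (auto intro!: eq_matI)
next
  case (Cons rs ps)
  then show ?case
    by (cases rs)
      (simp add: quad_ext_mat_add[OF tower_mat_carrier tower_mat_carrier tower_mat_carrier tower_mat_carrier])
qed

lemma tower_mat_smult: "tower_mat ps (\<lambda>i. c * x i) = c \<cdot>\<^sub>m tower_mat ps x"
proof (induction ps arbitrary: x)
  case Nil
  then show ?case by (auto intro!: eq_matI)
next
  case (Cons rs ps)
  then show ?case
    by (cases rs) (simp add: quad_ext_mat_smult[OF tower_mat_carrier tower_mat_carrier])
qed

lemma tower_mat_mult: "tower_mat ps x * tower_mat ps y = tower_mat ps (tower_mult ps x y)"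
proof (induction ps arbitrary: x y)
  case Nil
  then show ?case by (auto intro!: eq_matI simp: scalar_prod_def)
next
  case (Cons rs ps)
  obtain r s where rs: "rs = (r, s)" by fastforce
  define h where "h = (2::nat) ^ length ps"
  define x' where "x' = (\<lambda>i. x (i + h))"
  define y' where "y' = (\<lambda>i. y (i + h))"
  let ?T = "tower_mat ps" and ?M = "tower_mult ps"
  note quad_mult =
    quad_ext_mat_mult[OF tower_mat_carrier tower_mat_carrier tower_mat_carrier tower_mat_carrier]
  have "tower_mat (rs # ps) x * tower_mat (rs # ps) y
      = quad_ext_mat r s (?T x * ?T y + (- s) \<cdot>\<^sub>m (?T x' * ?T y'))
          (?T x * ?T y' + ?T x' * ?T y + r \<cdot>\<^sub>m (?T x' * ?T y'))"
    by (simp add: rs x'_def y'_def h_def quad_mult)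
  also have "\<dots> = quad_ext_mat r s (?T (\<lambda>k. ?M x y k + (- s) * ?M x' y' k))
      (?T (\<lambda>k. ?M x y' k + ?M x' y k + r * ?M x' y' k))"
    by (simp only: Cons.IH tower_mat_add tower_mat_smult)
  also have "\<dots> = tower_mat (rs # ps) (tower_mult (rs # ps) x y)"
    by (simp add: rs Let_def x'_def y'_def flip: h_def;
        intro arg_cong2[where f = "quad_ext_mat r s"] tower_mat_cong)
      (simp_all add: h_def)
  finally show ?case .
qed

lemma sum_lessThan_double:
  "(\<Sum>i<2 * h. f i) = (\<Sum>i<h. f i) + (\<Sum>i<h. f (i + (h::nat)))"
  using sum.atLeastLessThan_concat[of 0 h "2 * h" f] sum.shift_bounds_nat_ivl[of f 0 h h]
  by (simp add: atLeast0LessThan mult_2)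

text \<open>Structure constants of \<open>R[t]/(t\<^sup>2 - R t + S)\<close>: the coefficient of \<open>k\<close> in the product
  \<open>i \<cdot> j\<close>, where \<open>False\<close> stands for the basis element \<open>1\<close> and \<open>True\<close> for \<open>t\<close>.\<close>

definition quad_coeff :: "ipoly \<Rightarrow> ipoly \<Rightarrow> bool \<Rightarrow> bool \<Rightarrow> bool \<Rightarrow> ipoly" where
  "quad_coeff R S k i j =
     (if i \<and> j then (if k then R else PMul (PConst (- 1)) S)
      else if (i \<or> j) = k then PConst 1 else PConst 0)"

fun tower_coeff :: "(ipoly \<times> ipoly) list \<Rightarrow> nat \<Rightarrow> nat \<Rightarrow> nat \<Rightarrow> ipoly" where
  "tower_coeff [] k i j = PConst 1"
| "tower_coeff ((R, S) # ps) k i j =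
     (let h = 2 ^ length ps in
      PMul (quad_coeff R S (h \<le> k) (h \<le> i) (h \<le> j)) (tower_coeff ps (k mod h) (i mod h) (j mod h)))"

lemma tower_mult_eq_bilinear:
  assumes "k < 2 ^ length ps"
  shows "tower_mult (map (map_prod (ieval m n p q r s) (ieval m n p q r s)) ps) x y k
    = (\<Sum>i<2 ^ length ps. \<Sum>j<2 ^ length ps. ieval m n p q r s (tower_coeff ps k i j) * x i * y j)"
  using assms
proof (induction ps arbitrary: k x y)
  case Nil
  then show ?case by simp
next
  case (Cons RS ps)
  obtain R S where RS: "RS = (R, S)" by fastforce
  define h where "h = (2::nat) ^ length ps"
  let ?ev = "ieval m n p q r s"
  let ?B = "\<lambda>k x y. \<Sum>i<h. \<Sum>j<h. ?ev (tower_coeff ps k i j) * x i * y j"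
  have IH: "tower_mult (map (map_prod ?ev ?ev) ps) x y k = ?B k x y" if "k < h" for k x y
    using Cons.IH that by (simp add: h_def)
  have split: "(\<Sum>i<2 * h. \<Sum>j<2 * h. f i j) =
      (\<Sum>i<h. \<Sum>j<h. f i j + f i (j + h) + f (i + h) j + f (i + h) (j + h))" for f :: "nat \<Rightarrow> nat \<Rightarrow> int"
    by (simp add: sum_lessThan_double sum.distrib add_ac)
  show ?case
  proof (cases "k < h")
    case True
    then show ?thesis
      by (simp add: RS Let_def IH split flip: h_def)
        (simp add: quad_coeff_def sum_distrib_left sum.distrib sum_subtractf algebra_simps)
  next
    case False
    with Cons.prems have "k - h < h" "k mod h = k - h"
      by (simp_all add: RS h_def le_mod_geq)
    with False show ?thesis
      by (simp add: RS Let_def IH split flip: h_def)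
        (simp add: quad_coeff_def sum_distrib_left sum.distrib sum_subtractf algebra_simps)
  qed
qed

lemma Amat_eq_tower_mat: "Amat m n p q (x 0) (x 1) (x 2) (x 3) = tower_mat [(p, q), (m, n)] x"
proof -
  have T: "tower_mat [(p, q), (m, n)] x \<in> carrier_mat 4 4"
    using tower_mat_carrier[of "[(p, q), (m, n)]" x] by (simp del: tower_mat.simps)
  show ?thesis
  proof (rule eq_matI)
    fix i j
    assume "i < dim_row (tower_mat [(p, q), (m, n)] x)" "j < dim_col (tower_mat [(p, q), (m, n)] x)"
    with T have "i < 4" "j < 4" by simp_all
    then show "Amat m n p q (x 0) (x 1) (x 2) (x 3) $$ (i, j) = tower_mat [(p, q), (m, n)] x $$ (i, j)"
      by (auto simp: Amat_def mat_of_rows_list_def quad_ext_mat_def less_Suc_eq numeral_eq_Suc)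
  qed (use T in \<open>simp_all add: Amat_def mat_of_rows_list_def\<close>)
qed

lemma Pmat_eq_tower_mat: "Pmat m n p q r s x = tower_mat [(r, s), (p, q), (m, n)] (\<lambda>i. x (Suc i))"
proof -
  let ?A = "tower_mat [(p, q), (m, n)]"
  have lo: "Amat m n p q (x 1) (x 2) (x 3) (x 4) = ?A (\<lambda>i. x (Suc i))"
    using Amat_eq_tower_mat[of m n p q "\<lambda>i. x (Suc i)"]
    by (simp add: numeral_eq_Suc del: tower_mat.simps)
  have hi: "Amat m n p q (x 5) (x 6) (x 7) (x 8) = ?A (\<lambda>i. x (i + 5))"
    using Amat_eq_tower_mat[of m n p q "\<lambda>i. x (i + 5)"]
    by (simp add: numeral_eq_Suc del: tower_mat.simps)
  have "tower_mat [(r, s), (p, q), (m, n)] (\<lambda>i. x (Suc i))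
      = quad_ext_mat r s (?A (\<lambda>i. x (Suc i))) (?A (\<lambda>i. x (i + 5)))"
    by simp
  then show ?thesis
    unfolding Pmat_def Let_def lo hi by (simp add: quad_ext_mat_def del: tower_mat.simps)
qed

text \<open>Shifted by one since the coordinates of \<open>Pmat\<close> are \<open>x 1, \<dots>, x 8\<close>.\<close>

definition octic_coeff :: "nat \<Rightarrow> nat \<Rightarrow> nat \<Rightarrow> ipoly" where
  "octic_coeff k i j =
     tower_coeff [(PVar 4, PVar 5), (PVar 2, PVar 3), (PVar 0, PVar 1)] (k - 1) (i - 1) (j - 1)"

lemma bilin_octic_coeff:
  assumes "k \<in> {1..8}"
  shows "bilin octic_coeff m n p q r s x y k
    = tower_mult [(r, s), (p, q), (m, n)] (\<lambda>i. x (Suc i)) (\<lambda>i. y (Suc i)) (k - 1)"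
proof -
  let ?ps = "[(PVar 4, PVar 5), (PVar 2, PVar 3), (PVar 0, PVar 1)]"
  have shift: "(\<Sum>i\<in>{1..8}. f i) = (\<Sum>i<8. f (Suc i))" for f :: "nat \<Rightarrow> int"
    using sum.atLeast_Suc_atMost_Suc_shift[of f 0 7]
    by (simp add: atLeast0AtMost flip: lessThan_Suc_atMost)
  have "bilin octic_coeff m n p q r s x y k
      = (\<Sum>i<8. \<Sum>j<8. ieval m n p q r s (tower_coeff ?ps (k - 1) i j) * x (Suc i) * y (Suc j))"
    unfolding bilin_def shift by (simp add: octic_coeff_def del: tower_coeff.simps)
  also have "\<dots> = tower_mult [(r, s), (p, q), (m, n)] (\<lambda>i. x (Suc i)) (\<lambda>i. y (Suc i)) (k - 1)"
  proof -
    have "k - 1 < 2 ^ length ?ps"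
      using assms by auto
    from tower_mult_eq_bilinear[OF this, of m n p q r s "\<lambda>i. x (Suc i)" "\<lambda>i. y (Suc i)"] show ?thesis
      by (simp del: tower_mult.simps tower_coeff.simps)
  qed
  finally show ?thesis .
qed

lemma Pmat_carrier: "Pmat m n p q r s x \<in> carrier_mat 8 8"
  using tower_mat_carrier[of "[(r, s), (p, q), (m, n)]"]
  by (simp add: Pmat_eq_tower_mat del: tower_mat.simps)

lemma Pmat_mult_bilin:
  "Pmat m n p q r s x * Pmat m n p q r s y = Pmat m n p q r s (bilin octic_coeff m n p q r s x y)"
proof -
  let ?T = "tower_mat [(r, s), (p, q), (m, n)]"
  have "?T (\<lambda>i. x (Suc i)) * ?T (\<lambda>i. y (Suc i))
      = ?T (\<lambda>i. bilin octic_coeff m n p q r s x y (Suc i))"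
    unfolding tower_mat_mult by (rule tower_mat_cong) (simp add: bilin_octic_coeff del: tower_mult.simps)
  then show ?thesis
    by (simp only: Pmat_eq_tower_mat)
qed

lemma bilin_octic_coeff_1:
  "bilin octic_coeff m n p q r s x y 1
     = x 1 * y 1 - n * x 2 * y 2 - q * x 3 * y 3 + q * n * x 4 * y 4
       - s * x 5 * y 5 + s * n * x 6 * y 6 + s * q * x 7 * y 7 - s * q * n * x 8 * y 8"
proof -
  have "bilin octic_coeff m n p q r s x y 1
      = tower_mult [(r, s), (p, q), (m, n)] (\<lambda>i. x (Suc i)) (\<lambda>i. y (Suc i)) 0"
    using bilin_octic_coeff[of 1 m n p q r s x y] by (simp del: tower_mult.simps)
  then show ?thesis
    by (simp add: Let_def algebra_simps numeral_eq_Suc)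
qed

theorem mainTheorem10:
  "\<exists>C :: nat \<Rightarrow> nat \<Rightarrow> nat \<Rightarrow> ipoly.
     \<forall>(m::int) n p q r s (x::nat \<Rightarrow> int) (y::nat \<Rightarrow> int).
       (let z = bilin C m n p q r s x y in
          Pmat m n p q r s x * Pmat m n p q r s y = Pmat m n p q r s z
        \<and> z 1 = x 1 * y 1 - n * x 2 * y 2 - q * x 3 * y 3 + q * n * x 4 * y 4
              - s * x 5 * y 5 + s * n * x 6 * y 6 + s * q * x 7 * y 7
              - s * q * n * x 8 * y 8
        \<and> det (Pmat m n p q r s x) * det (Pmat m n p q r s y)
            = det (Pmat m n p q r s z))"
  by (intro exI[of _ octic_coeff] allI)
    (simp only: Let_def Pmat_mult_bilin bilin_octic_coeff_1
      det_mult[OF Pmat_carrier Pmat_carrier, symmetric] simp_thms)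

end
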